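(* Let $(U,\Phi)$ be a complete two-phase quantum walk with an initial state $\Phi\in\mathcal H_0$. Then $(U,\Phi)$ is unitary equivalent to $(U_{r,\sigma},\Phi_{\alpha,\theta})$ for some $0\le r_\varepsilon,\alpha\le1$ ($\varepsilon=+,-$) and $\sigma_i,\theta\in\mathbb R$ ($i=1,2$), where $\Phi_{\alpha,\theta}=\alpha e_1^0+e^{i\theta}\sqrt{1-\alpha^2}\,e_2^0$ and \begin{align*} U_{r,\sigma}={}&\sum_{n\ge0}|e_1^{n-1}\rangle\langle r_+e_1^n+s_+e_2^n|+|e_2^{n+1}\rangle\langle -e^{i\sigma_1}s_+e_1^n+e^{i\sigma_1}r_+e_2^n|\\ &+\sum_{n\le-1}|e_1^{n-1}\rangle\langle r_-e_1^n+e^{i\sigma_2}s_-e_2^n|+|e_2^{n+1}\rangle\langle -s_-e_1^n+e^{i\sigma_2}r_-e_2^n|, \end{align*} with $s_\varepsilon=\sqrt{1-r_\varepsilon^2}$, $r=(r_+,r_-)$, $\sigma=(\sigma_1,\sigma_2)$. Moreover, for $0<r_\varepsilon,r'_\varepsilon,\alpha,\alpha'<1$ and $\sigma_i,\sigma'_i,\theta,\theta'\in[0,2\pi)$, $(U_{r,\sigma},\Phi_{\alpha,\theta})$ and $(U_{r',\sigma'},\Phi_{\alpha',\theta'})$ are unitary equivalent if and only if $r=r'$, $\sigma=\sigma'$, $\alpha=\alpha'$ and $\theta=\theta'$.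
   Context: Let $\mathcal H_n=\mathbb C^2$ for $n\in\mathbb Z$, $\mathcal H=\bigoplus_{n\in\mathbb Z}\mathcal H_n$, $P_n$ the orthogonal projection onto $\mathcal H_n$, and $\{e_1^n,e_2^n\}$ the standard basis of $\mathcal H_n$; each $\mathcal H_n$ is identified with $\mathbb C^2$. Dirac notation: $|x\rangle\langle y|$ is the operator $z\mapsto\langle y,z\rangle x$ (inner product conjugate-linear in the first argument). A one-dimensional quantum walk is a unitary $U$ on $\mathcal H$ with $\operatorname{rank}(P_nUP_m)=1$ if $m=n\pm1$ and $0$ otherwise. Every such $U$ can be written as $U=\sum_{n\in\mathbb Z}|\xi_{n-1,n}\rangle\langle\zeta_{n-1,n}|+|\xi_{n+1,n}\rangle\langle\zeta_{n+1,n}|$, where $\{\xi_{n,n+1},\xi_{n+1,n}\}_{n}$ and $\{\zeta_{n,n+1},\zeta_{n+1,n}\}_{n}$ are orthonormal bases of $\mathcal H$ with $\xi_{n,n+1},\zeta_{n+1,n}\in\mathcal H_n$ and $\xi_{n+1,n},\zeta_{n,n+1}\in\mathcal H_{n+1}$. $U$ is a complete two-phase quantum walk if it has such a representation for which there exist $\xi_1^\pm,\xi_2^\pm,\zeta_1^\pm,\zeta_2^\pm\in\mathbb C^2$ with $\xi_{n,n+1}=\xi_1^+$, $\xi_{n,n-1}=\xi_2^+$, $\zeta_{n-1,n}=\zeta_1^+$, $\zeta_{n+1,n}=\zeta_2^+$ for all $n\ge0$, and the same with superscript $-$ for all $n\le-1$. An initial state is a unit vector $\Phi\in\mathcal H_0$.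 Since a walk $U$ is identified with $e^{i\lambda}U$ and a state $\Phi$ with $e^{i\lambda}\Phi$, pairs $(U,\Phi)$ and $(U',\Phi')$ are called unitary equivalent if there exist $\lambda,\lambda'\in\mathbb R$ and a unitary $W=\bigoplus_nW_n$ ($W_n$ unitary on $\mathcal H_n$) with $e^{i\lambda}WUW^*=U'$ and $e^{i\lambda'}W\Phi=\Phi'$. *)

theory Defs
  imports "HOL-Analysis.Analysis"
begin

text \<open>A vector of H_n = C^2 is an element of complex^2.
  An operator U on H = (+)_n H_n is represented by its block matrix
  U n m = P_n U P_m (a 2x2 complex matrix, viewed as a map H_m -> H_n).\<close>

type_synonym cvec = "complex ^ 2"
type_synonym cmat = "complex ^ 2 ^ 2"
type_synonym blockop = "int \<Rightarrow> int \<Rightarrow> cmat"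

definition e1 :: cvec where "e1 = (\<chi> i. if i = 1 then 1 else 0)"
definition e2 :: cvec where "e2 = (\<chi> i. if i = 2 then 1 else 0)"

definition cinner :: "cvec \<Rightarrow> cvec \<Rightarrow> complex" where
  "cinner x y = (\<Sum>i\<in>UNIV. cnj (x $ i) * y $ i)"

definition ketbra :: "cvec \<Rightarrow> cvec \<Rightarrow> cmat" where
  "ketbra x y = (\<chi> i j. x $ i * cnj (y $ j))"

definition cadj :: "cmat \<Rightarrow> cmat" where
  "cadj A = (\<chi> i j. cnj (A $ j $ i))"

definition unitary2 :: "cmat \<Rightarrow> bool" where
  "unitary2 W \<longleftrightarrow> cadj W ** W = mat 1 \<and> W ** cadj W = mat 1"

definition onb2 :: "cvec \<Rightarrow> cvec \<Rightarrow> bool" where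
  "onb2 a b \<longleftrightarrow> cinner a a = 1 \<and> cinner b b = 1 \<and> cinner a b = 0"

text \<open>Unitarity of the operator with block matrix U: U^*U = I and UU^* = I,
  blockwise. (For the banded operators considered, all these sums have finite support.)\<close>
definition unitary_op :: "blockop \<Rightarrow> bool" where
  "unitary_op U \<longleftrightarrow>
     (\<forall>n m. (\<Sum>\<^sub>\<infinity>k. cadj (U k n) ** U k m) = (if n = m then mat 1 else 0)) \<and>
     (\<forall>n m. (\<Sum>\<^sub>\<infinity>k. U n k ** cadj (U m k)) = (if n = m then mat 1 else 0))"

definition quantum_walk :: "blockop \<Rightarrow> bool" where
  "quantum_walk U \<longleftrightarrow> unitary_op U \<and>
     (\<forall>n m. rank (U n m) = (if m = n + 1 \<or> m = n - 1 then 1 else 0))"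

text \<open>Writing xi_{n,n+1} = xa n, xi_{n,n-1} = xb n,
  zeta_{n-1,n} = za n, zeta_{n+1,n} = zb n (all in H_n), the representation reads
  P_{n-1} U P_n = |xi_{n-1,n}><zeta_{n-1,n}|, P_{n+1} U P_n = |xi_{n+1,n}><zeta_{n+1,n}|.\<close>
definition complete_two_phase :: "blockop \<Rightarrow> bool" where
  "complete_two_phase U \<longleftrightarrow> quantum_walk U \<and>
     (\<exists>x1p x2p z1p z2p x1m x2m z1m z2m :: cvec.
        let xa = (\<lambda>n::int. if n \<ge> 0 then x1p else x1m);
            xb = (\<lambda>n::int. if n \<ge> 0 then x2p else x2m);
            za = (\<lambda>n::int. if n \<ge> 0 then z1p else z1m);
            zb = (\<lambda>n::int. if n \<ge> 0 then z2p else z2m)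
        in (\<forall>n. onb2 (xa n) (xb n) \<and> onb2 (za n) (zb n)) \<and>
           (\<forall>n m. U n m = (if n = m - 1 then ketbra (xa n) (za m)
                           else if n = m + 1 then ketbra (xb n) (zb m)
                           else 0)))"

definition unit_equiv :: "blockop \<Rightarrow> cvec \<Rightarrow> blockop \<Rightarrow> cvec \<Rightarrow> bool" where
  "unit_equiv U \<Phi> U' \<Phi>' \<longleftrightarrow>
     (\<exists>(lam::real) (lam'::real) (W :: int \<Rightarrow> cmat).
        (\<forall>n. unitary2 (W n)) \<and>
        (\<forall>n m. (\<chi> i j. exp (\<i> * of_real lam) * ((W n ** U n m ** cadj (W m)) $ i $ j)) = U' n m) \<and>
        (\<chi> i. exp (\<i> * of_real lam') * ((W 0) *v \<Phi>) $ i) = \<Phi>')"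

definition Urs :: "real \<Rightarrow> real \<Rightarrow> real \<Rightarrow> real \<Rightarrow> blockop" where
  "Urs rp rm \<sigma>1 \<sigma>2 = (\<lambda>n m.
     let sp = sqrt (1 - rp\<^sup>2); sm = sqrt (1 - rm\<^sup>2);
         c1 = exp (\<i> * of_real \<sigma>1); c2 = exp (\<i> * of_real \<sigma>2);
         bra_l = (if m \<ge> 0 then (\<chi> i. if i = 1 then of_real rp else of_real sp)
                  else (\<chi> i. if i = 1 then of_real rm else c2 * of_real sm));
         bra_r = (if m \<ge> 0 then (\<chi> i. if i = 1 then - c1 * of_real sp else c1 * of_real rp)
                  else (\<chi> i. if i = 1 then - of_real sm else c2 * of_real rm))
     in if n = m - 1 then ketbra e1 bra_l
        else if n = m + 1 then ketbra e2 bra_r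
        else 0)"

definition Phi :: "real \<Rightarrow> real \<Rightarrow> cvec" where
  "Phi \<alpha> \<theta> = (\<chi> i. if i = 1 then of_real \<alpha>
                  else exp (\<i> * of_real \<theta>) * of_real (sqrt (1 - \<alpha>\<^sup>2)))"

end

theory Submission
  imports Defs
begin

text \<open>A gauge W = (+)_n W_n turns every block |xi><zeta| of the walk into |W_n xi><W_m zeta|.
  Taking for W_n the unitary with rows a_n <xi_{n,n+1}| and b_n <xi_{n,n-1}| sends the kets to
  e_1 and e_2, and what is left on each half-line is the 2x2 unitary coin of overlaps
  <xi|zeta>, of the form [[p, -d q*], [q, d p*]] with |d| = 1. Choosing the phases a_n, b_n
  recursively along the line makes p and q nonnegative on both half-lines; together with a
  global phase e, whose square is fixed by the negative half-line, this leaves the two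
  determinant phases sigma_1, sigma_2 as the only invariants of the walk. The initial state
  is normalised in the same way, keeping its moduli and relative phase.
  Conversely, a gauge between two standard walks must be diagonal, since the blocks
  |e_1><...| of the target have a nonzero first bra component; comparing entries at the
  sites -2, ..., 1 then forces all parameters to agree.\<close>

lemma cnj_mult_self: "cnj z * z = of_real ((cmod z)\<^sup>2)"
  by (metis complex_norm_square mult.commute)

lemma cmod_eq_1_iff_cnj_mult: "cmod z = 1 \<longleftrightarrow> cnj z * z = 1"
proof -
  have "cnj z * z = 1 \<longleftrightarrow> (cmod z)\<^sup>2 = 1" by (simp only: cnj_mult_self of_real_eq_1_iff)
  thus ?thesis using norm_ge_zero[of z] by (auto simp: power2_eq_1_iff)
qed

lemma unit_cnj_eq_inverse: "cmod z = 1 \<Longrightarrow> cnj z = inverse z"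
  by (metis cmod_eq_1_iff_cnj_mult inverse_unique mult.commute)

lemma cis_Arg_unit: "cmod z = 1 \<Longrightarrow> cis (Arg z) = z"
  using cis_Arg[of z] by (cases "z = 0") (simp_all add: sgn_div_norm)

lemma cis_mult_polar: "cis t * z = cis (t + Arg z) * of_real (cmod z)"
proof -
  have "cis t * z = cis t * (of_real (cmod z) * cis (Arg z))"
    by (simp only: rcis_cmod_Arg[unfolded rcis_def])
  thus ?thesis by (simp add: cis_mult[symmetric] mult_ac)
qed

lemma cis_half_square: "cis (t / 2) ^ 2 = cis t"
  by (simp add: power2_eq_square cis_mult)

lemma unit_mult_of_real_eq:
  assumes "cmod c = 1" "0 < x" "0 < y" "c * of_real x = of_real y"
  shows "c = 1" "x = y"
proof -
  have "x = y" using arg_cong[OF assms(4), of cmod] assms(1-3) by (simp add: norm_mult)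
  thus "x = y" "c = 1" using assms(2,4) by auto
qed

lemma cis_eq_imp_eq:
  assumes "cis s = cis t" "s \<in> {0..<2*pi}" "t \<in> {0..<2*pi}"
  shows "s = t"
proof -
  have "cis (s - t) = 1" using assms(1) by (simp add: cis_divide[symmetric])
  then obtain n :: int where n: "s - t = 2 * pi * n"
    unfolding cis_conv_exp exp_eq_1 by (auto simp: algebra_simps)
  have "\<bar>2 * pi * n\<bar> < 2 * pi" using assms(2,3) n by auto
  hence "n = 0" by (simp add: abs_mult)
  thus ?thesis using n by simp
qed

lemma sum_squares_eq_1_imp_le_1:
  fixes x y :: real
  assumes "0 \<le> x" "x\<^sup>2 + y\<^sup>2 = 1"
  shows "x \<le> 1"
proof (rule power2_le_imp_le)
  show "x\<^sup>2 \<le> 1\<^sup>2" using assms(2) zero_le_power2[of y] unfolding one_power2 by linarith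
qed simp

lemma sqrt_one_minus_square_pos: "0 < r \<Longrightarrow> r < 1 \<Longrightarrow> 0 < sqrt (1 - r\<^sup>2)"
  by (simp add: power_less_one_iff abs_square_less_1)

lemma vec2_eq_iff: "(x :: 'a ^ 2) = y \<longleftrightarrow> x $ 1 = y $ 1 \<and> x $ 2 = y $ 2"
  by (simp add: vec_eq_iff forall_2)

lemma vector_2_chi: "(\<chi> i. if i = 1 then a else b) = (vector [a, b] :: 'a :: zero ^ 2)"
  by (simp add: vec2_eq_iff)

lemma e1_neq_0: "e1 \<noteq> 0" and e2_neq_0: "e2 \<noteq> 0"
  by (auto simp: vec2_eq_iff e1_def e2_def)

lemma cinner_2: "cinner x y = cnj (x $ 1) * y $ 1 + cnj (x $ 2) * y $ 2"
  by (simp add: cinner_def sum_2)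

lemma cinner_e1: "cinner e1 v = v $ 1" and cinner_e2: "cinner e2 v = v $ 2"
  by (simp_all add: cinner_2 e1_def e2_def)

lemma cinner_commute: "cinner y x = cnj (cinner x y)"
  by (simp add: cinner_2 mult.commute)

lemma norm_cvec_sq: "(norm (v :: cvec))\<^sup>2 = (cmod (v $ 1))\<^sup>2 + (cmod (v $ 2))\<^sup>2"
  by (simp add: norm_vec_def L2_set_def sum_2)

lemma cinner_self_eq_norm: "cinner v v = of_real ((norm v)\<^sup>2)"
  by (simp add: cinner_2 cnj_mult_self norm_cvec_sq)

lemma matrix_matrix_mult_2: "((A :: 'a :: semiring_1 ^ 2 ^ 2) ** B) $ i $ j = A $ i $ 1 * B $ 1 $ j + A $ i $ 2 * B $ 2 $ j"
  by (simp add: matrix_matrix_mult_def sum_2)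

lemma matrix_vector_mult_2: "((A :: 'a :: semiring_1 ^ 2 ^ 2) *v x) $ i = A $ i $ 1 * x $ 1 + A $ i $ 2 * x $ 2"
  by (simp add: matrix_vector_mult_def sum_2)

lemma cinner_adjoint: "cinner (A *v x) y = cinner x (cadj A *v y)"
  by (simp add: cinner_2 matrix_vector_mult_2 cadj_def algebra_simps)

lemma unitary2_iff: "unitary2 W \<longleftrightarrow> W ** cadj W = mat 1"
  unfolding unitary2_def using matrix_left_right_inverse by blast

lemma cinner_unitary2: "unitary2 W \<Longrightarrow> cinner (W *v v) (W *v w) = cinner v w"
  by (simp add: cinner_adjoint matrix_vector_mul_assoc unitary2_def)

lemma ketbra_sandwich: "A ** ketbra x y ** cadj B = ketbra (A *v x) (B *v y)"
  by (simp add: vec2_eq_iff matrix_matrix_mult_2 matrix_vector_mult_2 ketbra_def cadj_def algebra_simps)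

lemma scaled_ketbra_eq_iff:
  assumes "X \<noteq> 0"
  shows "(\<chi> i j. e * ketbra (c *s X) Y $ i $ j) = ketbra X L \<longleftrightarrow> L = cnj (e * c) *s Y"
proof
  assume eq: "(\<chi> i j. e * ketbra (c *s X) Y $ i $ j) = ketbra X L"
  obtain i where "X $ i \<noteq> 0" using assms by (auto simp: vec_eq_iff)
  moreover have "X $ i * (e * c * cnj (Y $ j)) = X $ i * cnj (L $ j)" for j
    using arg_cong[OF eq, of "\<lambda>M. M $ i $ j"] by (simp add: ketbra_def mult_ac)
  ultimately have "cnj (L $ j) = e * c * cnj (Y $ j)" for j by simp
  hence "L $ j = cnj (e * c) * Y $ j" for j by (metis complex_cnj_cnj complex_cnj_mult)
  thus "L = cnj (e * c) *s Y" by (simp add: vec_eq_iff)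
qed (simp add: vec_eq_iff ketbra_def mult_ac)

lemma scaled_ketbra_e1_imp:
  assumes "(\<chi> i j. e * ketbra X Y $ i $ j) = ketbra e1 L" "L \<noteq> 0"
  shows "X $ 2 = 0"
proof -
  obtain j where "L $ j \<noteq> 0" using assms(2) by (auto simp: vec_eq_iff)
  moreover have "e * X $ 1 * cnj (Y $ j) = cnj (L $ j)" "e * X $ 2 * cnj (Y $ j) = 0"
    using arg_cong[OF assms(1), of "\<lambda>M. M $ 1 $ j"] arg_cong[OF assms(1), of "\<lambda>M. M $ 2 $ j"]
    by (simp_all add: ketbra_def e1_def mult.assoc)
  ultimately show ?thesis by auto
qed

section \<open>Gauge matrices and coins\<close>

definition gauge_mat :: "complex \<Rightarrow> complex \<Rightarrow> cvec \<Rightarrow> cvec \<Rightarrow> cmat" where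
  "gauge_mat c d x y = (\<chi> i j. if i = 1 then c * cnj (x $ j) else d * cnj (y $ j))"

lemma gauge_mat_mult_vec: "gauge_mat c d x y *v v = vector [c * cinner x v, d * cinner y v]"
  by (simp add: vec2_eq_iff matrix_vector_mult_2 gauge_mat_def cinner_2 algebra_simps)

lemma gauge_mat_mult_onb2:
  assumes "onb2 x y"
  shows "gauge_mat c d x y *v x = c *s e1" "gauge_mat c d x y *v y = d *s e2"
  using assms cinner_commute[of x y]
  by (auto simp: gauge_mat_mult_vec onb2_def vec2_eq_iff e1_def e2_def)

lemma gauge_mat_e1_e2: "gauge_mat c d e1 e2 *v v = vector [c * v $ 1, d * v $ 2]"
  by (simp add: gauge_mat_mult_vec cinner_e1 cinner_e2)

lemma unitary2_gauge_mat:
  assumes "onb2 x y" "cmod c = 1" "cmod d = 1"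
  shows "unitary2 (gauge_mat c d x y)"
proof -
  have "cinner x x = 1" "cinner y y = 1" "cinner x y = 0" "cinner y x = 0"
    using assms(1) cinner_commute[of x y] by (auto simp: onb2_def)
  moreover have "cnj c * c = 1" "cnj d * d = 1" using assms(2,3) by (simp_all flip: cmod_eq_1_iff_cnj_mult)
  ultimately show ?thesis unfolding unitary2_iff vec_eq_iff forall_2
    by (simp add: matrix_matrix_mult_2 cadj_def gauge_mat_def mat_def cinner_2; algebra)
qed

lemma parseval2:
  assumes "onb2 x y"
  shows "cinner v w = cnj (cinner x v) * cinner x w + cnj (cinner y v) * cinner y w"
  using cinner_unitary2[OF unitary2_gauge_mat[OF assms, of 1 1], of v w]
  by (simp add: gauge_mat_mult_vec cinner_2)

lemma unitary2_lower_triangular: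
  assumes "unitary2 W" "W $ 2 $ 1 = 0"
  shows "W = gauge_mat (W $ 1 $ 1) (W $ 2 $ 2) e1 e2" "cmod (W $ 1 $ 1) = 1" "cmod (W $ 2 $ 2) = 1"
proof -
  have m: "cadj W ** W = mat 1" using assms(1) unfolding unitary2_def by simp
  have h11: "cnj (W $ 1 $ 1) * W $ 1 $ 1 = 1" and h12: "cnj (W $ 1 $ 1) * W $ 1 $ 2 = 0"
    using arg_cong[OF m, of "\<lambda>M. M $ 1 $ 1"] arg_cong[OF m, of "\<lambda>M. M $ 1 $ 2"] assms(2)
    by (simp_all add: matrix_matrix_mult_2 cadj_def mat_def)
  hence w12: "W $ 1 $ 2 = 0" by auto
  show "cmod (W $ 1 $ 1) = 1" using h11 by (simp add: cmod_eq_1_iff_cnj_mult)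
  show "cmod (W $ 2 $ 2) = 1" using arg_cong[OF m, of "\<lambda>M. M $ 2 $ 2"] w12
    by (simp add: matrix_matrix_mult_2 cadj_def mat_def cmod_eq_1_iff_cnj_mult)
  show "W = gauge_mat (W $ 1 $ 1) (W $ 2 $ 2) e1 e2"
    using w12 assms(2) by (simp add: vec2_eq_iff gauge_mat_def e1_def e2_def)
qed

lemma gauge_mat_ketbra:
  assumes "onb2 x y"
  shows "(\<chi> i j. e * (gauge_mat c d x y ** ketbra x z ** cadj W) $ i $ j) = ketbra e1 (cnj (e * c) *s (W *v z))"
    and "(\<chi> i j. e * (gauge_mat c d x y ** ketbra y z ** cadj W) $ i $ j) = ketbra e2 (cnj (e * d) *s (W *v z))"
  by (simp_all only: ketbra_sandwich gauge_mat_mult_onb2[OF assms] scaled_ketbra_eq_iff[OF e1_neq_0]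
      scaled_ketbra_eq_iff[OF e2_neq_0])

lemma unitary2_columns_form:
  fixes p q u v :: complex
  assumes pq: "cnj p * p + cnj q * q = 1" and orth: "cnj p * u + cnj q * v = 0"
    and uv: "cnj u * u + cnj v * v = 1"
  defines "d \<equiv> v * p - u * q"
  shows "u = - d * cnj q" "v = d * cnj p" "cmod d = 1"
proof -
  have orth': "p * cnj u + q * cnj v = 0" using arg_cong[OF orth, of cnj] by simp
  show "u = - d * cnj q" "v = d * cnj p" unfolding d_def using pq orth by algebra+
  show "cmod d = 1" unfolding cmod_eq_1_iff_cnj_mult d_def complex_cnj_diff complex_cnj_mult
    using pq orth orth' uv by algebra
qed

lemma coin_of_onb2:
  assumes "onb2 x1 x2" "onb2 z1 z2"
  defines "d \<equiv> cinner x2 z2 * cinner x1 z1 - cinner x1 z2 * cinner x2 z1"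
  shows "cmod (cinner x1 z1) ^ 2 + cmod (cinner x2 z1) ^ 2 = 1"
    and "cinner x1 z2 = - d * cnj (cinner x2 z1)" "cinner x2 z2 = d * cnj (cinner x1 z1)" "cmod d = 1"
proof -
  have z: "cinner z1 z1 = 1" "cinner z2 z2 = 1" "cinner z1 z2 = 0" using assms(2) by (auto simp: onb2_def)
  have pq: "cnj (cinner x1 z1) * cinner x1 z1 + cnj (cinner x2 z1) * cinner x2 z1 = 1"
    and orth: "cnj (cinner x1 z1) * cinner x1 z2 + cnj (cinner x2 z1) * cinner x2 z2 = 0"
    and uv: "cnj (cinner x1 z2) * cinner x1 z2 + cnj (cinner x2 z2) * cinner x2 z2 = 1"
    using parseval2[OF assms(1), of z1 z1] parseval2[OF assms(1), of z1 z2] parseval2[OF assms(1), of z2 z2] z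
    by simp_all
  show "cmod (cinner x1 z1) ^ 2 + cmod (cinner x2 z1) ^ 2 = 1"
    using pq unfolding cnj_mult_self of_real_add[symmetric] of_real_eq_1_iff .
  show "cinner x1 z2 = - d * cnj (cinner x2 z1)" "cinner x2 z2 = d * cnj (cinner x1 z1)" "cmod d = 1"
    unfolding d_def by (fact unitary2_columns_form[OF pq orth uv])+
qed

lemma unit_equivI:
  assumes "\<And>n. unitary2 (W n)"
    and "\<And>n m. (\<chi> i j. cis lam * (W n ** U n m ** cadj (W m)) $ i $ j) = U' n m"
    and "(\<chi> i. cis lam' * (W 0 *v \<Phi>) $ i) = \<Phi>'"
  shows "unit_equiv U \<Phi> U' \<Phi>'"
  unfolding unit_equiv_def cis_conv_exp[symmetric] using assms by blast

lemma unit_equivE: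
  assumes "unit_equiv U \<Phi> U' \<Phi>'"
  obtains lam lam' W where "\<And>n. unitary2 (W n)"
    and "\<And>n m. (\<chi> i j. cis lam * (W n ** U n m ** cadj (W m)) $ i $ j) = U' n m"
    and "(\<chi> i. cis lam' * (W 0 *v \<Phi>) $ i) = \<Phi>'"
  using assms unfolding unit_equiv_def cis_conv_exp[symmetric] by blast

lemma unit_equiv_refl: "unit_equiv U \<Phi> U \<Phi>"
proof (rule unit_equivI[where W = "\<lambda>_. mat 1" and lam = 0 and lam' = 0])
  have "cadj (mat 1) = mat 1" by (simp add: cadj_def mat_def vec_eq_iff)
  thus "unitary2 (mat 1)" "(\<chi> i j. cis 0 * (mat 1 ** U n m ** cadj (mat 1)) $ i $ j) = U n m" for n m
    by (simp_all add: unitary2_def matrix_mul_lid matrix_mul_rid)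
qed (simp add: matrix_vector_mul_lid)

text \<open>The two rows of the coin [[r, -\<delta> s], [\<gamma> s, \<gamma> \<delta> r]] with s = sqrt(1 - r^2); these are the
  bras of U_{r,\<sigma>}, with (\<gamma>, \<delta>) = (1, e^{i \<sigma>1}) for n \<ge> 0 and (e^{i \<sigma>2}, 1) for n < 0.\<close>

definition bra_l :: "real \<Rightarrow> complex \<Rightarrow> cvec" where
  "bra_l r \<gamma> = vector [of_real r, \<gamma> * of_real (sqrt (1 - r\<^sup>2))]"

definition bra_r :: "real \<Rightarrow> complex \<Rightarrow> complex \<Rightarrow> cvec" where
  "bra_r r \<gamma> \<delta> = vector [- \<delta> * of_real (sqrt (1 - r\<^sup>2)), \<gamma> * \<delta> * of_real r]"

lemma Urs_eq:
  "Urs rp rm \<sigma>1 \<sigma>2 n m =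
     (if n = m - 1 then ketbra e1 (if 0 \<le> m then bra_l rp 1 else bra_l rm (cis \<sigma>2))
      else if n = m + 1 then ketbra e2 (if 0 \<le> m then bra_r rp 1 (cis \<sigma>1) else bra_r rm (cis \<sigma>2) 1)
      else 0)"
  by (simp add: Urs_def Let_def bra_l_def bra_r_def vector_2_chi cis_conv_exp)

lemma Urs_left: "Urs rp rm \<sigma>1 \<sigma>2 (m - 1) m = ketbra e1 (if 0 \<le> m then bra_l rp 1 else bra_l rm (cis \<sigma>2))"
  by (simp add: Urs_eq)

lemma Urs_right:
  "Urs rp rm \<sigma>1 \<sigma>2 (m + 1) m = ketbra e2 (if 0 \<le> m then bra_r rp 1 (cis \<sigma>1) else bra_r rm (cis \<sigma>2) 1)"
  by (simp add: Urs_eq)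

lemma bra_l_ne_0: "0 < r \<Longrightarrow> bra_l r \<gamma> \<noteq> 0"
  by (auto simp: bra_l_def vec2_eq_iff)

lemma Phi_cis: "Phi \<alpha> \<theta> = vector [of_real \<alpha>, cis \<theta> * of_real (sqrt (1 - \<alpha>\<^sup>2))]"
  by (simp add: Phi_def vector_2_chi cis_conv_exp)

section \<open>Reduction to standard form\<close>

text \<open>One site of the gauged walk: with the coin entries in polar form r \<phi>, s \<psi> and the phases
  propagated by a1 = e cnj(\<phi>) a0, the gauged bras are in standard form.\<close>

lemma gauged_coin_bras:
  fixes r s :: real and \<phi> \<psi> :: complex
  assumes rs: "r\<^sup>2 + s\<^sup>2 = 1" "0 \<le> s"
    and units: "cmod e = 1" "cmod \<gamma> = 1" "cmod a0 = 1" "cmod \<phi> = 1" "cmod \<psi> = 1"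
    and a1: "a1 = e * cnj \<phi> * a0"
    and b: "b1 = e * \<gamma> * cnj \<psi> * a0" "b2 = e * \<gamma> * cnj \<psi> * a1"
  shows "cnj (e * a0) *s vector [a1 * (of_real r * \<phi>), b1 * (of_real s * \<psi>)] = bra_l r \<gamma>"
    and "cnj (e * b2) *s vector [a1 * (- d * cnj (of_real s * \<psi>)), b1 * (d * cnj (of_real r * \<phi>))] =
      bra_r r \<gamma> (cnj (e\<^sup>2 * \<gamma>) * d)"
proof -
  have "sqrt (1 - r\<^sup>2) = s" using rs by (simp flip: rs(1))
  moreover have "e \<noteq> 0" "\<gamma> \<noteq> 0" "a0 \<noteq> 0" "\<phi> \<noteq> 0" "\<psi> \<noteq> 0" using units by auto
  ultimately show "cnj (e * a0) *s vector [a1 * (of_real r * \<phi>), b1 * (of_real s * \<psi>)] = bra_l r \<gamma>"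
    and "cnj (e * b2) *s vector [a1 * (- d * cnj (of_real s * \<psi>)), b1 * (d * cnj (of_real r * \<phi>))] =
      bra_r r \<gamma> (cnj (e\<^sup>2 * \<gamma>) * d)"
    by (simp_all add: bra_l_def bra_r_def vec2_eq_iff a1 b unit_cnj_eq_inverse units field_simps
        power2_eq_square)
qed

lemma two_sided_phase_sequence:
  assumes "cmod wP = 1" "cmod wM = 1"
  obtains a :: "int \<Rightarrow> complex"
  where "\<And>m. cmod (a m) = 1" "\<And>m. a m = (if 0 \<le> m then wP else wM) * a (m - 1)"
proof
  define a where "a m = (if 0 \<le> m then wP ^ nat (m + 1) else cnj wM ^ nat (- m - 1))" for m :: int
  show "cmod (a m) = 1" for m using assms by (simp add: a_def norm_power)
  show "a m = (if 0 \<le> m then wP else wM) * a (m - 1)" for m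
  proof (cases "0 \<le> m")
    case True
    thus ?thesis by (cases "m = 0") (simp_all add: a_def nat_add_distrib flip: power_Suc)
  next
    case False
    hence "nat (- (m - 1) - 1) = Suc (nat (- m - 1))" by simp
    moreover have "wM * cnj wM = 1" using assms(2) cmod_eq_1_iff_cnj_mult[of wM] by (simp add: mult.commute)
    ultimately show ?thesis using False by (simp add: a_def mult.assoc flip: mult.assoc[of wM])
  qed
qed

lemma complete_two_phase_sides:
  assumes "complete_two_phase U"
  obtains x1 x2 z1 z2 :: "bool \<Rightarrow> cvec" where "\<And>s. onb2 (x1 s) (x2 s)" "\<And>s. onb2 (z1 s) (z2 s)"
    "\<And>n m. U n m = (if n = m - 1 then ketbra (x1 (0 \<le> n)) (z1 (0 \<le> m))
                     else if n = m + 1 then ketbra (x2 (0 \<le> n)) (z2 (0 \<le> m)) else 0)"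
proof -
  obtain x1p x2p z1p z2p x1m x2m z1m z2m :: cvec where
    on: "\<forall>n::int. onb2 (if n \<ge> 0 then x1p else x1m) (if n \<ge> 0 then x2p else x2m) \<and>
                  onb2 (if n \<ge> 0 then z1p else z1m) (if n \<ge> 0 then z2p else z2m)"
    and U: "\<forall>n m. U n m = (if n = m - 1 then ketbra (if n \<ge> 0 then x1p else x1m) (if m \<ge> 0 then z1p else z1m)
                           else if n = m + 1 then ketbra (if n \<ge> 0 then x2p else x2m) (if m \<ge> 0 then z2p else z2m)
                           else 0)"
    using assms unfolding complete_two_phase_def Let_def by blast
  show thesis
  proof (rule that[of "\<lambda>s. if s then x1p else x1m" "\<lambda>s. if s then x2p else x2m"
        "\<lambda>s. if s then z1p else z1m" "\<lambda>s. if s then z2p else z2m"])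
    show "onb2 (if s then x1p else x1m) (if s then x2p else x2m)"
      and "onb2 (if s then z1p else z1m) (if s then z2p else z2m)" for s
      using on[rule_format, of 0] on[rule_format, of "-1"] by (cases s; simp)+
  qed (use U in auto)
qed

text \<open>\<gamma> absorbs the mismatch between the phases of q on the two half-lines, and e is chosen so
  that the determinant phase of the negative half-line disappears.\<close>

lemma half_line_phases:
  assumes "cmod \<psi>\<^sub>1 = 1" "cmod \<psi>\<^sub>2 = 1" "cmod d = 1"
  obtains e \<gamma> where "cmod e = 1" "cmod \<gamma> = 1" "\<gamma> * cnj \<psi>\<^sub>2 = cnj \<psi>\<^sub>1" "cnj (e\<^sup>2 * \<gamma>) * d = 1"
proof
  define \<gamma> where "\<gamma> = \<psi>\<^sub>2 * cnj \<psi>\<^sub>1"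
  define e where "e = cis (Arg (d * cnj \<gamma>) / 2)"
  show "cmod e = 1" "cmod \<gamma> = 1" using assms by (simp_all add: e_def \<gamma>_def norm_mult)
  have "e\<^sup>2 = d * cnj \<gamma>" using \<open>cmod \<gamma> = 1\<close> assms(3) by (simp add: e_def cis_half_square cis_Arg_unit norm_mult)
  thus "cnj (e\<^sup>2 * \<gamma>) * d = 1" using \<open>cmod \<gamma> = 1\<close> assms(3) by (auto simp: unit_cnj_eq_inverse field_simps)
  show "\<gamma> * cnj \<psi>\<^sub>2 = cnj \<psi>\<^sub>1" using assms(2) by (auto simp: \<gamma>_def unit_cnj_eq_inverse field_simps)
qed

lemma coin_gauge_phases:
  fixes p q d :: "bool \<Rightarrow> complex"
  assumes pq: "\<And>s. (cmod (p s))\<^sup>2 + (cmod (q s))\<^sup>2 = 1" and d: "\<And>s. cmod (d s) = 1"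
  obtains lam \<sigma>1 \<sigma>2 and a b :: "int \<Rightarrow> complex"
  where "\<And>m. cmod (a m) = 1" "\<And>m. cmod (b m) = 1"
    "\<And>m. cnj (cis lam * a (m - 1)) *s vector [a m * p (0 \<le> m), b m * q (0 \<le> m)] =
      (if 0 \<le> m then bra_l (cmod (p True)) 1 else bra_l (cmod (p False)) (cis \<sigma>2))"
    "\<And>m. cnj (cis lam * b (m + 1)) *s
        vector [a m * (- d (0 \<le> m) * cnj (q (0 \<le> m))), b m * (d (0 \<le> m) * cnj (p (0 \<le> m)))] =
      (if 0 \<le> m then bra_r (cmod (p True)) 1 (cis \<sigma>1) else bra_r (cmod (p False)) (cis \<sigma>2) 1)"
proof -
  define \<phi> \<psi> where "\<phi> s = cis (Arg (p s))" and "\<psi> s = cis (Arg (q s))" for s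
  have polar: "p s = of_real (cmod (p s)) * \<phi> s" "q s = of_real (cmod (q s)) * \<psi> s" for s
    unfolding \<phi>_def \<psi>_def using rcis_cmod_Arg by (simp_all add: rcis_def)
  have "cmod (\<psi> s) = 1" "cmod (\<phi> s) = 1" for s by (simp_all add: \<phi>_def \<psi>_def)
  then obtain e \<gamma> where e: "cmod e = 1" and \<gamma>: "cmod \<gamma> = 1"
    and \<gamma>_\<psi>: "\<gamma> * cnj (\<psi> False) = cnj (\<psi> True)" and e_\<gamma>: "cnj (e\<^sup>2 * \<gamma>) * d False = 1"
    using half_line_phases[of "\<psi> True" "\<psi> False" "d False"] d by blast
  define lam where "lam = Arg e"
  define g where "g s = (if s then 1 else \<gamma>)" for s
  define \<delta> where "\<delta> s = cnj (e\<^sup>2 * g s) * d s" for s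
  have units: "cmod e = 1" "cmod (g s) = 1" "cmod (\<phi> s) = 1" "cmod (\<psi> s) = 1" for s
    using e \<gamma> \<open>cmod (\<psi> s) = 1\<close> \<open>cmod (\<phi> s) = 1\<close> by (simp_all add: g_def)
  have twist: "g s * cnj (\<psi> s) = cnj (\<psi> True)" for s using \<gamma>_\<psi> by (simp add: g_def)
  have \<delta>_False: "\<delta> False = 1" using e_\<gamma> by (simp add: \<delta>_def g_def)
  have "cmod (e * cnj (\<phi> True)) = 1" "cmod (e * cnj (\<phi> False)) = 1" using units by (simp_all add: norm_mult)
  then obtain a :: "int \<Rightarrow> complex" where a_unit: "\<And>m. cmod (a m) = 1"
    and a_step: "\<And>m. a m = (if 0 \<le> m then e * cnj (\<phi> True) else e * cnj (\<phi> False)) * a (m - 1)"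
    using two_sided_phase_sequence by blast
  define b where "b m = e * cnj (\<psi> True) * a (m - 1)" for m
  have bras: "cnj (e * a (m - 1)) *s vector [a m * p s, b m * q s] = bra_l (cmod (p s)) (g s)"
    "cnj (e * b (m + 1)) *s vector [a m * (- d s * cnj (q s)), b m * (d s * cnj (p s))]
      = bra_r (cmod (p s)) (g s) (\<delta> s)" if "s = (0 \<le> m)" for s m
  proof -
    have a1: "a m = e * cnj (\<phi> s) * a (m - 1)" using a_step[of m] that by simp
    have b: "b m = e * g s * cnj (\<psi> s) * a (m - 1)" "b (m + 1) = e * g s * cnj (\<psi> s) * a m"
      by (simp_all add: b_def mult.assoc twist)
    note site = gauged_coin_bras[OF pq[of s] norm_ge_zero units(1,2) a_unit units(3,4) a1 b]
    show "cnj (e * a (m - 1)) *s vector [a m * p s, b m * q s] = bra_l (cmod (p s)) (g s)"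
      using site(1) by (simp only: flip: polar)
    show "cnj (e * b (m + 1)) *s vector [a m * (- d s * cnj (q s)), b m * (d s * cnj (p s))]
      = bra_r (cmod (p s)) (g s) (\<delta> s)"
      using site(2)[of "d s"] by (simp only: \<delta>_def flip: polar)
  qed
  have phases: "cis lam = e" "cis (Arg (\<delta> True)) = \<delta> True" "cis (Arg \<gamma>) = \<gamma>"
    using e \<gamma> d[of True] by (simp_all add: lam_def cis_Arg_unit \<delta>_def g_def norm_mult norm_power)
  show thesis
  proof (rule that[of a b lam "Arg \<gamma>" "Arg (\<delta> True)"])
    show "cmod (b m) = 1" for m using units a_unit by (simp add: b_def norm_mult)
    show "cnj (cis lam * a (m - 1)) *s vector [a m * p (0 \<le> m), b m * q (0 \<le> m)] =
      (if 0 \<le> m then bra_l (cmod (p True)) 1 else bra_l (cmod (p False)) (cis (Arg \<gamma>)))" for m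
      using bras(1)[OF refl, of m] by (cases "0 \<le> m") (simp_all add: g_def phases)
    show "cnj (cis lam * b (m + 1)) *s
        vector [a m * (- d (0 \<le> m) * cnj (q (0 \<le> m))), b m * (d (0 \<le> m) * cnj (p (0 \<le> m)))] =
      (if 0 \<le> m then bra_r (cmod (p True)) 1 (cis (Arg (\<delta> True)))
       else bra_r (cmod (p False)) (cis (Arg \<gamma>)) 1)" for m
      using bras(2)[OF refl, of m] by (cases "0 \<le> m") (simp_all add: g_def phases \<delta>_False)
  qed (rule a_unit)
qed

lemma complete_two_phase_gauge:
  assumes "complete_two_phase U"
  obtains rp rm W c d x y lam \<sigma>1 \<sigma>2 where "0 \<le> rp" "rp \<le> 1" "0 \<le> rm" "rm \<le> 1"
    "\<And>n. unitary2 (W n)" "W 0 = gauge_mat c d x y" "onb2 x y" "cmod c = 1" "cmod d = 1"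
    "\<And>n m. (\<chi> i j. cis lam * (W n ** U n m ** cadj (W m)) $ i $ j) = Urs rp rm \<sigma>1 \<sigma>2 n m"
proof -
  obtain x1 x2 z1 z2 :: "bool \<Rightarrow> cvec" where onbx: "\<And>s. onb2 (x1 s) (x2 s)" and onbz: "\<And>s. onb2 (z1 s) (z2 s)"
    and U: "\<And>n m. U n m = (if n = m - 1 then ketbra (x1 (0 \<le> n)) (z1 (0 \<le> m))
                            else if n = m + 1 then ketbra (x2 (0 \<le> n)) (z2 (0 \<le> m)) else 0)"
    using complete_two_phase_sides[OF assms] by blast
  define p q where "p s = cinner (x1 s) (z1 s)" and "q s = cinner (x2 s) (z1 s)" for s
  define d where "d s = cinner (x2 s) (z2 s) * p s - cinner (x1 s) (z2 s) * q s" for s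
  have coin: "cmod (p s) ^ 2 + cmod (q s) ^ 2 = 1" "cinner (x1 s) (z2 s) = - d s * cnj (q s)"
    "cinner (x2 s) (z2 s) = d s * cnj (p s)" "cmod (d s) = 1" for s
    unfolding p_def q_def d_def by (fact coin_of_onb2[OF onbx onbz])+
  show thesis
  proof (rule coin_gauge_phases[of p q d, OF coin(1) coin(4)])
    fix lam \<sigma>1 \<sigma>2 and a b :: "int \<Rightarrow> complex"
    assume a: "\<And>m. cmod (a m) = 1" and b: "\<And>m. cmod (b m) = 1"
      and bra_l: "\<And>m. cnj (cis lam * a (m - 1)) *s vector [a m * p (0 \<le> m), b m * q (0 \<le> m)] =
        (if 0 \<le> m then bra_l (cmod (p True)) 1 else bra_l (cmod (p False)) (cis \<sigma>2))"
      and bra_r: "\<And>m. cnj (cis lam * b (m + 1)) *s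
          vector [a m * (- d (0 \<le> m) * cnj (q (0 \<le> m))), b m * (d (0 \<le> m) * cnj (p (0 \<le> m)))] =
        (if 0 \<le> m then bra_r (cmod (p True)) 1 (cis \<sigma>1) else bra_r (cmod (p False)) (cis \<sigma>2) 1)"
    define W where "W n = gauge_mat (a n) (b n) (x1 (0 \<le> n)) (x2 (0 \<le> n))" for n
    have W_vec: "W m *v z = vector [a m * cinner (x1 (0 \<le> m)) z, b m * cinner (x2 (0 \<le> m)) z]" for m z
      by (simp add: W_def gauge_mat_mult_vec)
    have blocks: "(\<chi> i j. cis lam * (W n ** U n m ** cadj (W m)) $ i $ j)
        = Urs (cmod (p True)) (cmod (p False)) \<sigma>1 \<sigma>2 n m" for n m
    proof -
      consider "n = m - 1" | "n = m + 1" | "n \<noteq> m - 1" "n \<noteq> m + 1" by blast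
      thus ?thesis
      proof cases
        case 1
        hence "U n m = ketbra (x1 (0 \<le> n)) (z1 (0 \<le> m))" by (simp add: U)
        hence "(\<chi> i j. cis lam * (W n ** U n m ** cadj (W m)) $ i $ j)
            = ketbra e1 (cnj (cis lam * a n) *s (W m *v z1 (0 \<le> m)))"
          unfolding W_def[of n] by (simp only: gauge_mat_ketbra(1)[OF onbx])
        thus ?thesis using bra_l[of m] 1 by (simp add: W_vec Urs_left p_def q_def)
      next
        case 2
        hence "U n m = ketbra (x2 (0 \<le> n)) (z2 (0 \<le> m))" by (simp add: U)
        hence "(\<chi> i j. cis lam * (W n ** U n m ** cadj (W m)) $ i $ j)
            = ketbra e2 (cnj (cis lam * b n) *s (W m *v z2 (0 \<le> m)))"
          unfolding W_def[of n] by (simp only: gauge_mat_ketbra(2)[OF onbx])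
        thus ?thesis using bra_r[of m] 2 by (simp add: W_vec Urs_right coin(2,3) p_def q_def)
      next
        case 3
        thus ?thesis by (simp add: U Urs_eq vec_eq_iff matrix_matrix_mult_2)
      qed
    qed
    show thesis
    proof (rule that[OF _ _ _ _ _ _ onbx[of True] a[of 0] b[of 0] blocks])
      show "unitary2 (W n)" for n unfolding W_def using onbx a b by (rule unitary2_gauge_mat)
    qed (simp_all add: W_def sum_squares_eq_1_imp_le_1[OF norm_ge_zero coin(1)])
  qed
qed

lemma gauged_state_standard:
  assumes "onb2 x y" "cmod c = 1" "cmod d = 1" "norm \<Phi> = 1"
  obtains \<alpha> \<theta> lam' where "0 \<le> \<alpha>" "\<alpha> \<le> 1" "(\<chi> i. cis lam' * (gauge_mat c d x y *v \<Phi>) $ i) = Phi \<alpha> \<theta>"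
proof -
  define f1 f2 where "f1 = c * cinner x \<Phi>" and "f2 = d * cinner y \<Phi>"
  have W\<Phi>: "gauge_mat c d x y *v \<Phi> = vector [f1, f2]" by (simp add: gauge_mat_mult_vec f1_def f2_def)
  have "cinner (gauge_mat c d x y *v \<Phi>) (gauge_mat c d x y *v \<Phi>) = cinner \<Phi> \<Phi>"
    using assms by (simp add: cinner_unitary2 unitary2_gauge_mat)
  hence "(norm (vector [f1, f2] :: cvec))\<^sup>2 = (norm \<Phi>)\<^sup>2" unfolding W\<Phi> cinner_self_eq_norm of_real_eq_iff .
  hence f: "(cmod f1)\<^sup>2 + (cmod f2)\<^sup>2 = 1" using assms(4) by (simp add: norm_cvec_sq)
  hence "1 - (cmod f1)\<^sup>2 = (cmod f2)\<^sup>2" by linarith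
  hence "sqrt (1 - (cmod f1)\<^sup>2) = cmod f2" by simp
  moreover have "cmod f1 \<le> 1" by (rule sum_squares_eq_1_imp_le_1[OF norm_ge_zero f])
  moreover have "cis (- Arg f1) * f1 = of_real (cmod f1)"
    and "cis (- Arg f1) * f2 = cis (- Arg f1 + Arg f2) * of_real (cmod f2)"
    by (simp_all only: cis_mult_polar[of "- Arg f1"]) simp
  ultimately show thesis
    by (intro that[of "cmod f1" "- Arg f1" "- Arg f1 + Arg f2"])
      (simp_all add: W\<Phi> Phi_cis vec2_eq_iff)
qed

lemma complete_two_phase_equiv_standard:
  assumes "complete_two_phase U" "norm \<Phi> = 1"
  shows "\<exists>rp rm \<alpha> \<sigma>1 \<sigma>2 \<theta> :: real. 0 \<le> rp \<and> rp \<le> 1 \<and> 0 \<le> rm \<and> rm \<le> 1 \<and> 0 \<le> \<alpha> \<and> \<alpha> \<le> 1 \<and>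
           unit_equiv U \<Phi> (Urs rp rm \<sigma>1 \<sigma>2) (Phi \<alpha> \<theta>)"
proof -
  obtain rp rm W c d x y lam \<sigma>1 \<sigma>2 where r: "0 \<le> rp" "rp \<le> 1" "0 \<le> rm" "rm \<le> 1"
    and W: "\<And>n. unitary2 (W n)" "W 0 = gauge_mat c d x y" "onb2 x y" "cmod c = 1" "cmod d = 1"
    and blocks: "\<And>n m. (\<chi> i j. cis lam * (W n ** U n m ** cadj (W m)) $ i $ j) = Urs rp rm \<sigma>1 \<sigma>2 n m"
    using complete_two_phase_gauge[OF assms(1)] by blast
  obtain \<alpha> \<theta> lam' where \<alpha>: "0 \<le> \<alpha>" "\<alpha> \<le> 1"
    and state: "(\<chi> i. cis lam' * (gauge_mat c d x y *v \<Phi>) $ i) = Phi \<alpha> \<theta>"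
    using gauged_state_standard[OF W(3-5) assms(2)] by blast
  have "unit_equiv U \<Phi> (Urs rp rm \<sigma>1 \<sigma>2) (Phi \<alpha> \<theta>)"
    by (rule unit_equivI[OF W(1) blocks, where lam' = lam']) (simp only: W(2) state)
  thus ?thesis using r \<alpha> by blast
qed

section \<open>Uniqueness of the standard form\<close>

lemma standard_walks_equiv_diagonal:
  assumes equiv: "unit_equiv U \<Phi> U' \<Phi>'"
    and U: "\<And>m. U (m - 1) m = ketbra e1 (L m)" "\<And>m. U (m + 1) m = ketbra e2 (R m)"
    and U': "\<And>m. U' (m - 1) m = ketbra e1 (L' m)" "\<And>m. U' (m + 1) m = ketbra e2 (R' m)"
    and L'_ne: "\<And>m. L' m \<noteq> 0"
  obtains e c a b where "cmod e = 1" "cmod c = 1" "\<And>m. cmod (a m) = 1" "\<And>m. cmod (b m) = 1"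
    "\<And>m. L' m = cnj (e * a (m - 1)) *s vector [a m * L m $ 1, b m * L m $ 2]"
    "\<And>m. R' m = cnj (e * b (m + 1)) *s vector [a m * R m $ 1, b m * R m $ 2]"
    "\<Phi>' = c *s vector [a 0 * \<Phi> $ 1, b 0 * \<Phi> $ 2]"
proof -
  obtain lam lam' W where W: "\<And>n. unitary2 (W n)"
    and blocks: "\<And>n m. (\<chi> i j. cis lam * (W n ** U n m ** cadj (W m)) $ i $ j) = U' n m"
    and state: "(\<chi> i. cis lam' * (W 0 *v \<Phi>) $ i) = \<Phi>'"
    using unit_equivE[OF equiv] by blast
  have blocks_l: "(\<chi> i j. cis lam * ketbra (W (m - 1) *v e1) (W m *v L m) $ i $ j) = ketbra e1 (L' m)"
    and blocks_r: "(\<chi> i j. cis lam * ketbra (W (m + 1) *v e2) (W m *v R m) $ i $ j) = ketbra e2 (R' m)" for m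
    using blocks[of "m - 1" m] blocks[of "m + 1" m] by (simp_all add: U U' ketbra_sandwich)
  have "(W n *v e1) $ 2 = 0" for n
    using scaled_ketbra_e1_imp[OF blocks_l[of "n + 1"] L'_ne] by simp
  hence lower: "W n $ 2 $ 1 = 0" for n by (simp add: matrix_vector_mult_2 e1_def)
  define a where "a n = W n $ 1 $ 1" for n
  define b where "b n = W n $ 2 $ 2" for n
  have W_diag: "W n = gauge_mat (a n) (b n) e1 e2" and a: "cmod (a n) = 1" and b: "cmod (b n) = 1" for n
    unfolding a_def b_def using unitary2_lower_triangular[OF W lower] by blast+
  have W_vec: "W n *v v = vector [a n * v $ 1, b n * v $ 2]" for n v
    by (simp add: W_diag gauge_mat_e1_e2)
  have W_e1: "W n *v e1 = a n *s e1" and W_e2: "W n *v e2 = b n *s e2" for n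
    unfolding W_vec by (simp_all add: vec2_eq_iff e1_def e2_def)
  show thesis
  proof
    show "L' m = cnj (cis lam * a (m - 1)) *s vector [a m * L m $ 1, b m * L m $ 2]" for m
      using blocks_l[of m, unfolded W_e1 scaled_ketbra_eq_iff[OF e1_neq_0]] by (simp only: W_vec)
    show "R' m = cnj (cis lam * b (m + 1)) *s vector [a m * R m $ 1, b m * R m $ 2]" for m
      using blocks_r[of m, unfolded W_e2 scaled_ketbra_eq_iff[OF e2_neq_0]] by (simp only: W_vec)
    show "\<Phi>' = cis lam' *s vector [a 0 * \<Phi> $ 1, b 0 * \<Phi> $ 2]"
      using state by (simp add: vec2_eq_iff W_vec)
  qed (simp_all add: a b)
qed

lemma bra_l_diagonal_eq:
  assumes eq: "bra_l r' \<gamma>' = cnj (e * a0) *s vector [a1 * bra_l r \<gamma> $ 1, b1 * bra_l r \<gamma> $ 2]"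
    and units: "cmod e = 1" "cmod a0 = 1" "cmod a1 = 1"
    and r: "0 < r" "r < 1" "0 < r'"
  shows "r = r'" "a1 = e * a0" "\<gamma>' = cnj (e * a0) * b1 * \<gamma>"
proof -
  have "(cnj (e * a0) * a1) * of_real r = of_real r'"
    using arg_cong[OF eq, of "\<lambda>v. v $ 1"] by (simp add: bra_l_def mult_ac)
  hence phase: "cnj (e * a0) * a1 = 1" and "r = r'"
    using unit_mult_of_real_eq[of "cnj (e * a0) * a1" r r'] units r by (auto simp: norm_mult)
  thus "r = r'" by simp
  have "cnj e * e = 1" "cnj a0 * a0 = 1" using units by (simp_all flip: cmod_eq_1_iff_cnj_mult)
  thus "a1 = e * a0" using phase unfolding complex_cnj_mult by algebra
  have "\<gamma>' * of_real (sqrt (1 - r\<^sup>2)) = (cnj (e * a0) * b1 * \<gamma>) * of_real (sqrt (1 - r\<^sup>2))"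
    using arg_cong[OF eq, of "\<lambda>v. v $ 2"] \<open>r = r'\<close> by (simp add: bra_l_def mult_ac)
  moreover have "sqrt (1 - r\<^sup>2) > 0" using r(1,2) by (rule sqrt_one_minus_square_pos)
  ultimately show "\<gamma>' = cnj (e * a0) * b1 * \<gamma>" by simp
qed

lemma bra_r_diagonal_eq:
  assumes eq: "bra_r r \<gamma>' \<delta>' = cnj (e * b2) *s vector [a1 * bra_r r \<gamma> \<delta> $ 1, b1 * bra_r r \<gamma> \<delta> $ 2]"
    and r: "0 < r" "r < 1"
  shows "\<delta>' = cnj (e * b2) * a1 * \<delta>"
proof -
  have "\<delta>' * of_real (sqrt (1 - r\<^sup>2)) = (cnj (e * b2) * a1 * \<delta>) * of_real (sqrt (1 - r\<^sup>2))"
    using arg_cong[OF eq, of "\<lambda>v. v $ 1"] by (simp add: bra_r_def mult_ac)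
  moreover have "sqrt (1 - r\<^sup>2) > 0" using r(1,2) by (rule sqrt_one_minus_square_pos)
  ultimately show ?thesis by simp
qed

lemma Phi_eq_phase_imp:
  assumes eq: "Phi \<alpha>' \<theta>' = c *s Phi \<alpha> \<theta>" and c: "cmod c = 1"
    and \<alpha>: "0 < \<alpha>" "\<alpha> < 1" "0 < \<alpha>'"
  shows "\<alpha> = \<alpha>'" "cis \<theta> = cis \<theta>'"
proof -
  have "c * of_real \<alpha> = of_real \<alpha>'" using arg_cong[OF eq, of "\<lambda>v. v $ 1"] by (simp add: Phi_cis)
  hence "c = 1" "\<alpha> = \<alpha>'" using unit_mult_of_real_eq[OF c] \<alpha> by blast+
  thus "\<alpha> = \<alpha>'" by simp
  have "cis \<theta>' * of_real (sqrt (1 - \<alpha>\<^sup>2)) = cis \<theta> * of_real (sqrt (1 - \<alpha>\<^sup>2))"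
    using arg_cong[OF eq, of "\<lambda>v. v $ 2"] \<open>c = 1\<close> \<open>\<alpha> = \<alpha>'\<close> by (simp add: Phi_cis)
  moreover have "sqrt (1 - \<alpha>\<^sup>2) > 0" using \<alpha>(1,2) by (rule sqrt_one_minus_square_pos)
  ultimately show "cis \<theta> = cis \<theta>'" by simp
qed

lemma Urs_equiv_imp_params:
  assumes equiv: "unit_equiv (Urs rp rm \<sigma>1 \<sigma>2) (Phi \<alpha> \<theta>) (Urs rp' rm' \<sigma>1' \<sigma>2') (Phi \<alpha>' \<theta>')"
    and r: "0 < rp" "rp < 1" "0 < rm" "rm < 1" "0 < \<alpha>" "\<alpha> < 1" "0 < rp'" "0 < rm'" "0 < \<alpha>'"
  shows "rp = rp' \<and> rm = rm' \<and> cis \<sigma>1 = cis \<sigma>1' \<and> cis \<sigma>2 = cis \<sigma>2' \<and> \<alpha> = \<alpha>' \<and> cis \<theta> = cis \<theta>'"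
proof -
  obtain e c and a b :: "int \<Rightarrow> complex" where units: "cmod e = 1" "cmod c = 1" "\<And>m. cmod (a m) = 1" "\<And>m. cmod (b m) = 1"
    and L: "\<And>m. (if 0 \<le> m then bra_l rp' 1 else bra_l rm' (cis \<sigma>2')) =
      cnj (e * a (m - 1)) *s vector [a m * (if 0 \<le> m then bra_l rp 1 else bra_l rm (cis \<sigma>2)) $ 1,
                                    b m * (if 0 \<le> m then bra_l rp 1 else bra_l rm (cis \<sigma>2)) $ 2]"
    and R: "\<And>m. (if 0 \<le> m then bra_r rp' 1 (cis \<sigma>1') else bra_r rm' (cis \<sigma>2') 1) =
      cnj (e * b (m + 1)) *s vector [a m * (if 0 \<le> m then bra_r rp 1 (cis \<sigma>1) else bra_r rm (cis \<sigma>2) 1) $ 1,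
                                    b m * (if 0 \<le> m then bra_r rp 1 (cis \<sigma>1) else bra_r rm (cis \<sigma>2) 1) $ 2]"
    and state: "Phi \<alpha>' \<theta>' = c *s vector [a 0 * Phi \<alpha> \<theta> $ 1, b 0 * Phi \<alpha> \<theta> $ 2]"
  proof (rule standard_walks_equiv_diagonal[OF equiv Urs_left Urs_right Urs_left Urs_right])
    show "(if 0 \<le> m then bra_l rp' 1 else bra_l rm' (cis \<sigma>2')) \<noteq> 0" for m
      using r by (simp add: bra_l_ne_0)
  qed (rule that)
  have "rp = rp'" and a0: "a 0 = e * a (-1)" and b0: "1 = cnj (e * a (-1)) * b 0"
    using bra_l_diagonal_eq[OF L[of 0, simplified, folded complex_cnj_mult]] units r by (simp_all add: norm_mult)
  have b1: "1 = cnj (e * a 0) * b 1"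
    using bra_l_diagonal_eq(3)[OF L[of 1, simplified, folded complex_cnj_mult]] units r by (simp add: norm_mult)
  have "rm = rm'" and \<sigma>2: "cis \<sigma>2' = cnj (e * a (-2)) * b (-1) * cis \<sigma>2"
    using bra_l_diagonal_eq(1,3)[OF L[of "-1", simplified, folded complex_cnj_mult]] units r by (simp_all add: norm_mult)
  have \<sigma>1: "cis \<sigma>1' = cnj (e * b 1) * a 0 * cis \<sigma>1"
    using bra_r_diagonal_eq[OF R[of 0, simplified, folded complex_cnj_mult, folded \<open>rp = rp'\<close>]] r by simp
  have bm1: "1 = cnj (e * b 0) * a (-1)"
    using bra_r_diagonal_eq[OF R[of "-1", simplified, folded complex_cnj_mult, folded \<open>rm = rm'\<close>]] r by simp
  have bm2: "1 = cnj (e * b (-1)) * a (-2)"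
    using bra_r_diagonal_eq[OF R[of "-2", simplified, folded complex_cnj_mult, folded \<open>rm = rm'\<close>]] r by simp
  have u: "cnj e * e = 1" "cnj (a 0) * a 0 = 1" "cnj (a (-1)) * a (-1) = 1" "cnj (a (-2)) * a (-2) = 1"
    "cnj (b 0) * b 0 = 1" "cnj (b 1) * b 1 = 1" "cnj (b (-1)) * b (-1) = 1"
    using units by (simp_all flip: cmod_eq_1_iff_cnj_mult)
  have "cis \<sigma>1 = cis \<sigma>1'" "cis \<sigma>2 = cis \<sigma>2'" "a 0 = b 0"
    using \<sigma>1 \<sigma>2 a0 b0 b1 bm1 bm2 u unfolding complex_cnj_mult by algebra+
  moreover have "Phi \<alpha>' \<theta>' = (c * a 0) *s Phi \<alpha> \<theta>"
    using state \<open>a 0 = b 0\<close> by (simp add: vec2_eq_iff)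
  from Phi_eq_phase_imp[OF this] have "\<alpha> = \<alpha>'" "cis \<theta> = cis \<theta>'"
    using units r by (simp_all add: norm_mult)
  ultimately show ?thesis using \<open>rp = rp'\<close> \<open>rm = rm'\<close> by simp
qed

lemma Urs_Phi_equiv_iff:
  assumes r: "0 < rp" "rp < 1" "0 < rm" "rm < 1" "0 < \<alpha>" "\<alpha> < 1"
    "0 < rp'" "rp' < 1" "0 < rm'" "rm' < 1" "0 < \<alpha>'" "\<alpha>' < 1"
    and angles: "\<sigma>1 \<in> {0..<2*pi}" "\<sigma>2 \<in> {0..<2*pi}" "\<theta> \<in> {0..<2*pi}"
      "\<sigma>1' \<in> {0..<2*pi}" "\<sigma>2' \<in> {0..<2*pi}" "\<theta>' \<in> {0..<2*pi}"
  shows "unit_equiv (Urs rp rm \<sigma>1 \<sigma>2) (Phi \<alpha> \<theta>) (Urs rp' rm' \<sigma>1' \<sigma>2') (Phi \<alpha>' \<theta>')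
     \<longleftrightarrow> rp = rp' \<and> rm = rm' \<and> \<sigma>1 = \<sigma>1' \<and> \<sigma>2 = \<sigma>2' \<and> \<alpha> = \<alpha>' \<and> \<theta> = \<theta>'"
proof
  assume "unit_equiv (Urs rp rm \<sigma>1 \<sigma>2) (Phi \<alpha> \<theta>) (Urs rp' rm' \<sigma>1' \<sigma>2') (Phi \<alpha>' \<theta>')"
  from Urs_equiv_imp_params[OF this] r angles cis_eq_imp_eq
  show "rp = rp' \<and> rm = rm' \<and> \<sigma>1 = \<sigma>1' \<and> \<sigma>2 = \<sigma>2' \<and> \<alpha> = \<alpha>' \<and> \<theta> = \<theta>'" by metis
qed (auto intro: unit_equiv_refl)

theorem theorem3p5:
  shows "(\<forall>(U::blockop) (\<Phi>::cvec). complete_two_phase U \<and> norm \<Phi> = 1 \<longrightarrow>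
            (\<exists>rp rm \<alpha> \<sigma>1 \<sigma>2 \<theta> :: real.
               0 \<le> rp \<and> rp \<le> 1 \<and> 0 \<le> rm \<and> rm \<le> 1 \<and> 0 \<le> \<alpha> \<and> \<alpha> \<le> 1 \<and>
               unit_equiv U \<Phi> (Urs rp rm \<sigma>1 \<sigma>2) (Phi \<alpha> \<theta>)))
       \<and>
         (\<forall>rp rm \<alpha> \<sigma>1 \<sigma>2 \<theta> rp' rm' \<alpha>' \<sigma>1' \<sigma>2' \<theta>' :: real.
            0 < rp \<and> rp < 1 \<and> 0 < rm \<and> rm < 1 \<and> 0 < \<alpha> \<and> \<alpha> < 1 \<and>
            0 < rp' \<and> rp' < 1 \<and> 0 < rm' \<and> rm' < 1 \<and> 0 < \<alpha>' \<and> \<alpha>' < 1 \<and>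
            \<sigma>1 \<in> {0..<2*pi} \<and> \<sigma>2 \<in> {0..<2*pi} \<and> \<theta> \<in> {0..<2*pi} \<and>
            \<sigma>1' \<in> {0..<2*pi} \<and> \<sigma>2' \<in> {0..<2*pi} \<and> \<theta>' \<in> {0..<2*pi} \<longrightarrow>
            (unit_equiv (Urs rp rm \<sigma>1 \<sigma>2) (Phi \<alpha> \<theta>) (Urs rp' rm' \<sigma>1' \<sigma>2') (Phi \<alpha>' \<theta>')
             \<longleftrightarrow> rp = rp' \<and> rm = rm' \<and> \<sigma>1 = \<sigma>1' \<and> \<sigma>2 = \<sigma>2' \<and> \<alpha> = \<alpha>' \<and> \<theta> = \<theta>'))"
  by (intro conjI allI impI)
    (simp_all add: complete_two_phase_equiv_standard[simplified] Urs_Phi_equiv_iff)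

end
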